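(* Let $(T,\lambda)$ be an increasing tree. Then $(T,\lambda)$ is left increasing if and only if, for any branchings $b$ and $b'$ of $T$ such that $b$ is to the left of $b'$ and the vertices of $b$ and $b'$ do not lie on a common path connecting a leaf of $T$ with the root of $T$, we have $\lambda(b)<\lambda(b')$.
   Context: A (planar rooted) tree is a finite planar rooted tree in which each vertex has one outgoing edge and at least two incoming edges (ordered left to right), incoming edges being leaves or coming from other vertices; $\varepsilon$ is the trivial tree with no vertex. For $m\ge1$, $\bigvee(T_0,\ldots,T_m)$ joins the roots of $T_0,\ldots,T_m$ to a new vertex with a new root; every non-trivial tree is uniquely such a wedge. A vertex with $j+1$ incoming edges carries $j$ branchings (pairs of consecutive incoming edges); the level $\lambda(b)$ of a branching is the level of its vertex. "To the left" refers to the left-to-right order $\preceq$ on branchings defined recursively: for $T=\bigvee(T_0,\ldots,T_m)$ with root branchings $b_1,\ldots,b_m$ ($b_i$ between $T_{i-1}$ and $T_i$), $b_i\prec b\prec b_{i+1}$ for $b$ in $T_i$, branchings of $T_i$ ordered recursively. A level function is a surjection $\lambda$ from vertices onto $[k]$ strictly increasing along each leaf-to-root path; an increasing tree is $(T,\lambda)$. $\mathsf{Inc}$: $\mathsf{Inc}(\varepsilon)=\varepsilon$; if $T=\bigvee(T_0,\ldots,T_m)$ and $\mathsf{Inc}(T_i)=(T_i,\lambda_i)$ with $k_i$ levels, then $\mathsf{Inc}(T)=(T,\lambda)$ with $\lambda(v)=k_0+\cdots+k_{i-1}+\lambda_i(v)$ for vertices $v$ of $T_i$ and root vertex level $k_0+\cdots+k_m+1$.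 An increasing tree is left increasing if it equals $\mathsf{Inc}(T)$ for some tree $T$. *)

theory Defs
  imports Main
begin

text \<open>Planar rooted trees. Eps is the trivial tree (no vertex); a leaf incoming
edge is represented by an Eps subtree. Node [T0,...,Tm] is the wedge
of T0,...,Tm (well-formedness requires m >= 1).\<close>
datatype tree = Eps | Node "tree list"

fun wf_tree :: "tree \<Rightarrow> bool" where
  "wf_tree Eps = True"
| "wf_tree (Node ts) = (2 \<le> length ts \<and> (\<forall>t\<in>set ts. wf_tree t))"

text \<open>Vertices are addressed by paths from the root: [] is the root vertex,
i # p is the vertex p inside the i-th subtree (0-based).\<close>
fun subtree :: "tree \<Rightarrow> nat list \<Rightarrow> tree option" where
  "subtree t [] = Some t"
| "subtree Eps (i # p) = None"
| "subtree (Node ts) (i # p) = (if i < length ts then subtree (ts ! i) p else None)"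

definition vertices :: "tree \<Rightarrow> nat list set" where
  "vertices T = {v. \<exists>ts. subtree T v = Some (Node ts)}"

text \<open>Branchings: (v, j) with 1 \<le> j \<le> m is the branching of vertex v between its
(j-1)-th and j-th incoming edges. The list below enumerates all branchings
in the left-to-right order defined in the paper.\<close>
fun branchings :: "tree \<Rightarrow> (nat list \<times> nat) list"
and branchings_from :: "nat \<Rightarrow> tree list \<Rightarrow> (nat list \<times> nat) list" where
  "branchings Eps = []"
| "branchings (Node ts) = branchings_from 0 ts"
| "branchings_from i [] = []"
| "branchings_from i (t # ts) =
     (if i = 0 then [] else [([], i)])
     @ map (\<lambda>(v, j). (i # v, j)) (branchings t)
     @ branchings_from (Suc i) ts"

definition left_of :: "tree \<Rightarrow> (nat list \<times> nat) \<Rightarrow> (nat list \<times> nat) \<Rightarrow> bool" where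
  "left_of T b b' = (\<exists>i j. i < j \<and> j < length (branchings T)
                         \<and> branchings T ! i = b \<and> branchings T ! j = b')"

text \<open>Two vertices lie on a common leaf-to-root path iff one is an ancestor
(or equal) of the other.\<close>
definition on_common_path :: "nat list \<Rightarrow> nat list \<Rightarrow> bool" where
  "on_common_path v w = ((\<exists>u. w = v @ u) \<or> (\<exists>u. v = w @ u))"

definition increasing :: "tree \<Rightarrow> (nat list \<Rightarrow> nat) \<Rightarrow> bool" where
  "increasing T lam =
     ((\<exists>k. lam ` vertices T = {1..k}) \<and>
      (\<forall>v i. v \<in> vertices T \<and> v @ [i] \<in> vertices T \<longrightarrow> lam (v @ [i]) < lam v))"

fun nlev :: "tree \<Rightarrow> nat" where
  "nlev Eps = 0"
| "nlev (Node ts) = sum_list (map nlev ts) + 1"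

fun inc :: "tree \<Rightarrow> nat list \<Rightarrow> nat" where
  "inc Eps p = 0"
| "inc (Node ts) [] = nlev (Node ts)"
| "inc (Node ts) (i # p) = sum_list (map nlev (take i ts)) + inc (ts ! i) p"

definition left_increasing :: "tree \<Rightarrow> (nat list \<Rightarrow> nat) \<Rightarrow> bool" where
  "left_increasing T lam = (\<forall>v \<in> vertices T. lam v = inc T v)"

end

theory Submission
  imports Defs
begin

text \<open>
  Order the vertices in postorder: descendants before their ancestors, and vertices in
  a left subtree before those in a right subtree. The level function of \<open>Inc(T)\<close> is
  strictly increasing along this total order, and so is any level function satisfying
  the criterion: two branchings whose vertices are not on a common path are compared by
  the branching order exactly as their vertices are compared by postorder, and every
  vertex carries a branching, so the criterion applies to all such pairs of vertices.
  A strictly increasing surjection of a finite totally ordered set onto \<open>{1..k}\<close> is the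
  rank function, so both level functions coincide.
\<close>

lemma vertices_Eps [simp]: "vertices Eps = {}"
  by (auto simp: vertices_def elim: subtree.elims)

lemma Nil_in_vertices_Node [simp]: "[] \<in> vertices (Node ts)"
  by (auto simp: vertices_def)

lemma Cons_in_vertices_Node [simp]:
  "i # v \<in> vertices (Node ts) \<longleftrightarrow> i < length ts \<and> v \<in> vertices (ts ! i)"
  by (auto simp: vertices_def)

lemma vertices_append_prefix: "v @ u \<in> vertices T \<Longrightarrow> v \<in> vertices T"
proof (induction v arbitrary: T)
  case Nil
  then show ?case by (cases T; cases u) auto
next
  case (Cons a v)
  then show ?case by (cases T) auto
qed

lemma vertices_Node:
  "vertices (Node ts) = insert [] (\<Union>i<length ts. (#) i ` vertices (ts ! i))"
proof (rule set_eqI)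
  fix v
  show "v \<in> vertices (Node ts) \<longleftrightarrow> v \<in> insert [] (\<Union>i<length ts. (#) i ` vertices (ts ! i))"
    by (cases v) auto
qed

lemma finite_vertices_card_eq_nlev: "finite (vertices T) \<and> card (vertices T) = nlev T"
proof (induction T)
  case Eps
  then show ?case by simp
next
  case (Node ts)
  let ?V = "\<lambda>i. (#) i ` vertices (ts ! i)"
  have finite_V: "finite (?V i)" and card_V: "card (?V i) = nlev (ts ! i)"
    if "i < length ts" for i
    using Node.IH[of "ts ! i"] that by (auto simp: card_image)
  have "card (\<Union>i<length ts. ?V i) = (\<Sum>i<length ts. card (?V i))"
    by (rule card_UN_disjoint) (auto simp: finite_V)
  also have "\<dots> = sum_list (map nlev ts)"
    by (simp add: card_V sum_list_sum_nth atLeast0LessThan)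
  moreover have "[] \<notin> (\<Union>i<length ts. ?V i)"
    by blast
  ultimately show ?case
    using finite_V by (simp add: vertices_Node)
qed

fun left_addr :: "nat list \<Rightarrow> nat list \<Rightarrow> bool" where
  "left_addr (a # v) (b # w) = (a < b \<or> (a = b \<and> left_addr v w))"
| "left_addr _ _ = False"

lemma on_common_path_or_left_addr:
  "on_common_path v w \<or> left_addr v w \<or> left_addr w v"
proof (induction v arbitrary: w)
  case Nil
  then show ?case by (simp add: on_common_path_def)
next
  case (Cons a v)
  then show ?case
    by (cases w) (auto simp: on_common_path_def linorder_neq_iff)
qed

lemma left_addr_append_prefix: "\<not> left_addr v (v @ u)" "\<not> left_addr (v @ u) v"
  by (induction v) auto

lemma left_addr_imp_not_on_common_path: "left_addr v w \<Longrightarrow> \<not> on_common_path v w"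
  unfolding on_common_path_def using left_addr_append_prefix by blast

definition postorder_less :: "nat list \<Rightarrow> nat list \<Rightarrow> bool" where
  "postorder_less w v \<longleftrightarrow> (\<exists>u. u \<noteq> [] \<and> w = v @ u) \<or> left_addr w v"

lemma postorder_less_total: "w \<noteq> v \<Longrightarrow> postorder_less w v \<or> postorder_less v w"
  using on_common_path_or_left_addr[of w v]
  unfolding postorder_less_def on_common_path_def by force

lemma rank_eq_card:
  fixes f :: "'a \<Rightarrow> nat"
  assumes total: "\<And>x y. x \<in> V \<Longrightarrow> y \<in> V \<Longrightarrow> x \<noteq> y \<Longrightarrow> R x y \<or> R y x"
    and mono: "\<And>x y. x \<in> V \<Longrightarrow> y \<in> V \<Longrightarrow> R x y \<Longrightarrow> f x < f y"
    and onto: "f ` V = {1..k}" and x: "x \<in> V"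
  shows "f x = card {y \<in> V. y = x \<or> R y x}"
proof -
  have inj: "inj_on f V"
    by (rule inj_onI) (metis total mono less_irrefl)
  have "{y \<in> V. y = x \<or> R y x} = {y \<in> V. f y \<le> f x}"
    using total x mono by (metis (lifting) le_eq_less_or_eq not_less)
  moreover have "f ` {y \<in> V. f y \<le> f x} = {1..f x}"
  proof
    show "f ` {y \<in> V. f y \<le> f x} \<subseteq> {1..f x}"
      using onto by auto
    show "{1..f x} \<subseteq> f ` {y \<in> V. f y \<le> f x}"
    proof
      fix n
      assume "n \<in> {1..f x}"
      moreover have "f x \<le> k"
        using onto x by auto
      ultimately have "n \<in> f ` V"
        using onto by auto
      then show "n \<in> f ` {y \<in> V. f y \<le> f x}"
        using \<open>n \<in> {1..f x}\<close> by auto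
    qed
  qed
  moreover have "inj_on f {y \<in> V. f y \<le> f x}"
    using inj by (rule inj_on_subset) auto
  ultimately show ?thesis
    by (metis card_image card_atLeastAtMost diff_Suc_1)
qed

lemma set_branchings_from:
  "b \<in> set (branchings_from i ts) \<longleftrightarrow>
     (\<exists>k<length ts. (b = ([], i + k) \<and> i + k \<noteq> 0) \<or>
        (\<exists>v j. b = ((i + k) # v, j) \<and> (v, j) \<in> set (branchings (ts ! k))))"
proof (induction ts arbitrary: i)
  case Nil
  then show ?case by simp
next
  case (Cons t ts)
  show ?case
    unfolding Ex_less_Suc2 length_Cons by (auto simp: Cons.IH)
qed

lemma branching_vertex_in_vertices: "b \<in> set (branchings T) \<Longrightarrow> fst b \<in> vertices T"
proof (induction T arbitrary: b)
  case Eps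
  then show ?case by simp
next
  case (Node ts)
  then show ?case by (force simp: set_branchings_from)
qed

lemma first_branching_in_branchings:
  "wf_tree T \<Longrightarrow> v \<in> vertices T \<Longrightarrow> (v, 1) \<in> set (branchings T)"
proof (induction T arbitrary: v)
  case Eps
  then show ?case by simp
next
  case (Node ts)
  then show ?case
    by (cases v) (auto simp: set_branchings_from intro!: exI[of _ 1])
qed

lemma sorted_wrt_branchings:
  "sorted_wrt (\<lambda>b b'. \<not> left_addr (fst b') (fst b)) (branchings T)"
  "sorted_wrt (\<lambda>b b'. \<not> left_addr (fst b') (fst b)) (branchings_from i ts)"
  by (induction T and i ts rule: branchings_branchings_from.induct)
    (auto simp: sorted_wrt_append sorted_wrt_map set_branchings_from case_prod_unfold)

lemma left_of_iff_left_addr: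
  assumes "b \<in> set (branchings T)" "b' \<in> set (branchings T)"
    and "\<not> on_common_path (fst b) (fst b')"
  shows "left_of T b b' \<longleftrightarrow> left_addr (fst b) (fst b')"
proof
  assume "left_of T b b'"
  then have "\<not> left_addr (fst b') (fst b)"
    using sorted_wrt_branchings(1)[of T] by (auto simp: left_of_def sorted_wrt_iff_nth_less)
  then show "left_addr (fst b) (fst b')"
    using on_common_path_or_left_addr assms(3) by blast
next
  assume left: "left_addr (fst b) (fst b')"
  obtain i j where "i < length (branchings T)" "branchings T ! i = b"
    "j < length (branchings T)" "branchings T ! j = b'"
    using assms(1,2) by (auto simp: in_set_conv_nth)
  moreover have "\<not> j \<le> i"
    using calculation sorted_wrt_branchings(1)[of T] left left_addr_append_prefix(1)[of "fst b" "[]"]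
    by (auto simp: sorted_wrt_iff_nth_less le_less)
  ultimately show "left_of T b b'"
    unfolding left_of_def not_le by blast
qed

abbreviation levels_before :: "tree list \<Rightarrow> nat \<Rightarrow> nat" where
  "levels_before ts i \<equiv> sum_list (map nlev (take i ts))"

lemma levels_before_Suc:
  "i < length ts \<Longrightarrow> levels_before ts (Suc i) = levels_before ts i + nlev (ts ! i)"
  by (simp add: take_Suc_conv_app_nth)

lemma levels_before_mono: "i \<le> j \<Longrightarrow> levels_before ts i \<le> levels_before ts j"
  by (metis le_add_diff_inverse map_append sum_list_append take_add le_add1)

lemma levels_before_le: "levels_before ts i \<le> sum_list (map nlev ts)"
  by (metis append_take_drop_id map_append sum_list_append le_add1)

lemma inc_bounds: "v \<in> vertices T \<Longrightarrow> 1 \<le> inc T v \<and> inc T v \<le> nlev T"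
proof (induction T arbitrary: v)
  case Eps
  then show ?case by simp
next
  case (Node ts)
  show ?case
  proof (cases v)
    case (Cons a r)
    then have a: "a < length ts" "r \<in> vertices (ts ! a)"
      using Node.prems by auto
    then have "1 \<le> inc (ts ! a) r \<and> inc (ts ! a) r \<le> nlev (ts ! a)"
      using Node.IH by simp
    then show ?thesis
      using Cons a levels_before_Suc[of a ts] levels_before_le[of "Suc a" ts] by auto
  qed simp
qed

lemma inc_descendant_less: "v @ u \<in> vertices T \<Longrightarrow> u \<noteq> [] \<Longrightarrow> inc T (v @ u) < inc T v"
proof (induction v arbitrary: T)
  case Nil
  then obtain ts i r where "T = Node ts" "u = i # r" "i < length ts" "r \<in> vertices (ts ! i)"
    by (cases T; cases u) auto
  then show ?case
    using inc_bounds[of r "ts ! i"] levels_before_Suc[of i ts] levels_before_le[of "Suc i" ts]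
    by auto
next
  case (Cons a v)
  then show ?case by (cases T) auto
qed

lemma inc_left_addr_less:
  "v \<in> vertices T \<Longrightarrow> w \<in> vertices T \<Longrightarrow> left_addr v w \<Longrightarrow> inc T v < inc T w"
proof (induction v arbitrary: w T)
  case Nil
  then show ?case by simp
next
  case (Cons a v)
  then obtain ts b w' where T: "T = Node ts" and w: "w = b # w'"
    and a: "a < length ts" "v \<in> vertices (ts ! a)" and b: "b < length ts" "w' \<in> vertices (ts ! b)"
    by (cases T; cases w) auto
  show ?case
  proof (cases "a < b")
    case True
    then have "levels_before ts (Suc a) \<le> levels_before ts b"
      by (intro levels_before_mono) simp
    then show ?thesis
      using T w inc_bounds[OF a(2)] inc_bounds[OF b(2)] levels_before_Suc[OF a(1)] by auto
  next
    case False
    then show ?thesis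
      using Cons T w a b by auto
  qed
qed

lemma inc_postorder_less:
  "w \<in> vertices T \<Longrightarrow> v \<in> vertices T \<Longrightarrow> postorder_less w v \<Longrightarrow> inc T w < inc T v"
  unfolding postorder_less_def using inc_descendant_less inc_left_addr_less by blast

lemma inc_image_vertices: "inc T ` vertices T = {1..nlev T}"
proof -
  have "inj_on (inc T) (vertices T)"
    by (rule inj_onI) (metis inc_postorder_less postorder_less_total less_irrefl)
  then have "card (inc T ` vertices T) = card {1..nlev T}"
    using card_image finite_vertices_card_eq_nlev by (metis card_atLeastAtMost diff_Suc_1)
  moreover have "inc T ` vertices T \<subseteq> {1..nlev T}"
    using inc_bounds by auto
  ultimately show ?thesis
    using card_subset_eq by (metis finite_atLeastAtMost)
qed

lemma increasing_descendant_less: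
  assumes "increasing T lam"
  shows "v @ u \<in> vertices T \<Longrightarrow> u \<noteq> [] \<Longrightarrow> lam (v @ u) < lam v"
proof (induction u rule: rev_induct)
  case Nil
  then show ?case by simp
next
  case (snoc x u)
  then have "v @ u \<in> vertices T"
    using vertices_append_prefix[of "v @ u" "[x]"] by simp
  moreover have "lam (v @ u @ [x]) < lam (v @ u)"
    using assms snoc.prems calculation unfolding increasing_def by (metis append_assoc)
  ultimately show ?case
    using snoc.IH by (cases "u = []") auto
qed

lemma left_increasing_left_of_less:
  assumes "left_increasing T lam"
    and "b \<in> set (branchings T)" "b' \<in> set (branchings T)"
    and "left_of T b b'" "\<not> on_common_path (fst b) (fst b')"
  shows "lam (fst b) < lam (fst b')"
proof -
  have "inc T (fst b) < inc T (fst b')"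
    using assms(2-) left_of_iff_left_addr inc_left_addr_less branching_vertex_in_vertices by blast
  then show ?thesis
    using assms(1-3) branching_vertex_in_vertices unfolding left_increasing_def by simp
qed

lemma postorder_mono_if_left_of_mono:
  assumes "wf_tree T" "increasing T lam"
    and left_of_less: "\<And>b b'. b \<in> set (branchings T) \<Longrightarrow> b' \<in> set (branchings T) \<Longrightarrow>
      left_of T b b' \<Longrightarrow> \<not> on_common_path (fst b) (fst b') \<Longrightarrow> lam (fst b) < lam (fst b')"
    and "w \<in> vertices T" "v \<in> vertices T" "postorder_less w v"
  shows "lam w < lam v"
proof (cases "left_addr w v")
  case True
  have "(w, 1) \<in> set (branchings T)" "(v, 1) \<in> set (branchings T)"
    using first_branching_in_branchings assms(1,4,5) by auto
  moreover have "\<not> on_common_path w v"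
    using left_addr_imp_not_on_common_path True .
  moreover from calculation have "left_of T (w, 1) (v, 1)"
    using left_of_iff_left_addr True by fastforce
  ultimately show ?thesis
    using left_of_less by fastforce
next
  case False
  then show ?thesis
    using assms(2,4,6) increasing_descendant_less unfolding postorder_less_def by blast
qed

lemma left_increasing_if_postorder_mono:
  assumes "increasing T lam"
    and "\<And>w v. w \<in> vertices T \<Longrightarrow> v \<in> vertices T \<Longrightarrow> postorder_less w v \<Longrightarrow> lam w < lam v"
  shows "left_increasing T lam"
  unfolding left_increasing_def
proof
  fix v
  assume v: "v \<in> vertices T"
  obtain k where lam_onto: "lam ` vertices T = {1..k}"
    using assms(1) unfolding increasing_def by blast
  have "lam v = card {w \<in> vertices T. w = v \<or> postorder_less w v}"
    by (rule rank_eq_card[where R = postorder_less, OF _ assms(2) lam_onto v])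
      (simp add: postorder_less_total)
  also have "\<dots> = inc T v"
    by (rule rank_eq_card[where R = postorder_less, OF _ inc_postorder_less inc_image_vertices v,
          symmetric]) (simp add: postorder_less_total)
  finally show "lam v = inc T v" .
qed

theorem lemma4p6:
  fixes T :: tree and lam :: "nat list \<Rightarrow> nat"
  assumes "wf_tree T" and "increasing T lam"
  shows "left_increasing T lam \<longleftrightarrow>
    (\<forall>b b'. b \<in> set (branchings T) \<and> b' \<in> set (branchings T) \<and> left_of T b b'
       \<and> \<not> on_common_path (fst b) (fst b') \<longrightarrow> lam (fst b) < lam (fst b'))"
  (is "_ \<longleftrightarrow> ?left_of_mono")
proof
  assume "left_increasing T lam"
  then show ?left_of_mono
    using left_increasing_left_of_less by blast
next
  assume ?left_of_mono
  then show "left_increasing T lam"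
    using assms postorder_mono_if_left_of_mono[OF assms]
    by (intro left_increasing_if_postorder_mono) blast+
qed

end
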